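(* Let $\mathcal{A}=\mathcal{R}*_K\mathcal{S}*_L\mathcal{T}\in\mathbb{C}^{I_1\times\cdots\times I_N\times J_1\times\cdots\times J_M}$, where $\mathcal{R}\in\mathbb{C}^{I_1\times\cdots\times I_N\times H_1\times\cdots\times H_K}$, $\mathcal{S}\in\mathbb{C}^{H_1\times\cdots\times H_K\times G_1\times\cdots\times G_L}$ and $\mathcal{T}\in\mathbb{C}^{G_1\times\cdots\times G_L\times J_1\times\cdots\times J_M}$. Then $$(\mathcal{R}^{\dagger}*_N\mathcal{A}*_M\mathcal{T}^{\dagger})^{\dagger}=(\mathcal{A}*_M\mathcal{T}^{\dagger})^{\dagger}*_N\mathcal{A}*_M(\mathcal{R}^{\dagger}*_N\mathcal{A})^{\dagger}.$$
   Context: $\mathbb{C}^{I_1\times\cdots\times I_N}$ denotes the set of complex tensors of order $N$ and dimension $I_1\times\cdots\times I_N$. For $\mathcal{A}\in\mathbb{C}^{I_1\times\cdots\times I_N\times K_1\times\cdots\times K_N}$ and $\mathcal{B}\in\mathbb{C}^{K_1\times\cdots\times K_N\times J_1\times\cdots\times J_M}$, the Einstein product $\mathcal{A}*_N\mathcal{B}\in\mathbb{C}^{I_1\times\cdots\times I_N\times J_1\times\cdots\times J_M}$ is defined by $(\mathcal{A}*_N\mathcal{B})_{i_1\dots i_N j_1\dots j_M}=\sum_{k_1,\dots,k_N}a_{i_1\dots i_N k_1\dots k_N}b_{k_1\dots k_N j_1\dots j_M}$; it is associative. For $\mathcal{A}\in\mathbb{C}^{I_1\times\cdots\times I_N\times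 J_1\times\cdots\times J_M}$, $\mathcal{A}^H$ denotes the conjugate transpose, $(\mathcal{A}^H)_{j_1\dots j_M i_1\dots i_N}=\overline{a_{i_1\dots i_N j_1\dots j_M}}$, and the Moore–Penrose inverse $\mathcal{A}^{\dagger}$ is the unique tensor $\mathcal{X}\in\mathbb{C}^{J_1\times\cdots\times J_M\times I_1\times\cdots\times I_N}$ with $\mathcal{A}*_M\mathcal{X}*_N\mathcal{A}=\mathcal{A}$, $\mathcal{X}*_N\mathcal{A}*_M\mathcal{X}=\mathcal{X}$, $(\mathcal{A}*_M\mathcal{X})^H=\mathcal{A}*_M\mathcal{X}$, $(\mathcal{X}*_N\mathcal{A})^H=\mathcal{X}*_N\mathcal{A}$. *)

theory Defs
  imports Complex_Main
begin

text \<open>A tensor in C^(I_1 x ... x I_N x J_1 x ... x J_M) is modelled as a function of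
  two index blocks: the block (i_1,...,i_N) ranges over a finite type 'i (standing for
  the index set I_1 x ... x I_N), the block (j_1,...,j_M) over a finite type 'j.\<close>

type_synonym ('i, 'j) tensor = "'i \<Rightarrow> 'j \<Rightarrow> complex"

definition einstein :: "('i, 'k::finite) tensor \<Rightarrow> ('k, 'j) tensor \<Rightarrow> ('i, 'j) tensor"
  (infixl "\<star>" 70) where
  "A \<star> B = (\<lambda>i j. \<Sum>k\<in>UNIV. A i k * B k j)"

definition ctrans :: "('i, 'j) tensor \<Rightarrow> ('j, 'i) tensor" where
  "ctrans A = (\<lambda>j i. cnj (A i j))"

definition is_mp_inverse :: "('i::finite, 'j::finite) tensor \<Rightarrow> ('j, 'i) tensor \<Rightarrow> bool" where
  "is_mp_inverse A X \<longleftrightarrow>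
     A \<star> X \<star> A = A \<and> X \<star> A \<star> X = X \<and>
     ctrans (A \<star> X) = A \<star> X \<and> ctrans (X \<star> A) = X \<star> A"

definition mp_inv :: "('i::finite, 'j::finite) tensor \<Rightarrow> ('j, 'i) tensor" where
  "mp_inv A = (THE X. is_mp_inverse A X)"

end

theory Submission
  imports Defs "HOL-Analysis.Analysis"
begin

(* For the Hermitian matrix
   M = A^H A the spans of {M^i | i >= k} form a decreasing chain of subspaces of a
   finite-dimensional space, so for some k we get M^k = M^(k+1) Q with Q in the real span
   of the powers of M; hence Q is Hermitian and commutes with M.  Since M is Hermitian,
   M^k B = 0 forces M B = 0, so M Q M = M, and then A^+ = Q M Q A^H.

   For the identity put P = R^+ A T^+.  Then A = R P T, R P = A T^+ and P T = R^+ A.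
   Because R^+ R P = P and P T T^+ = P, the orthogonal projectors (R P)^+ (R P) and
   (P T) (P T)^+ coincide with P^+ P and P P^+, so the right-hand side collapses to
   P^+ P P^+ = P^+. *)

definition mat_ctrans :: "complex^'n^'m \<Rightarrow> complex^'m^'n" where
  "mat_ctrans A = (\<chi> i j. cnj (A $ j $ i))"

lemma mat_ctrans_nth [simp]: "mat_ctrans A $ i $ j = cnj (A $ j $ i)"
  by (simp add: mat_ctrans_def)

lemma mat_ctrans_mat_ctrans [simp]: "mat_ctrans (mat_ctrans A) = A"
  by (simp add: vec_eq_iff)

lemma mat_ctrans_mat_1 [simp]: "mat_ctrans (mat 1) = mat 1"
  by (simp add: vec_eq_iff mat_def)

lemma mat_ctrans_matrix_mult: "mat_ctrans (A ** B) = mat_ctrans B ** mat_ctrans A"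
  by (simp add: vec_eq_iff matrix_matrix_mult_def mult.commute)

lemma matrix_add_rdistrib: "(A + B) ** C = A ** C + B ** (C :: 'a::semiring_1^'n^'m)"
  by (simp add: vec_eq_iff matrix_matrix_mult_def sum.distrib distrib_right)

lemma matrix_diff_ldistrib: "A ** (B - C) = A ** B - A ** (C :: 'a::ring_1^'n^'m)"
  by (simp add: vec_eq_iff matrix_matrix_mult_def sum_subtractf right_diff_distrib)

lemma linear_matrix_mult_left: "linear (\<lambda>B. A ** (B :: 'a::real_algebra_1^'n^'m))"
  by (rule linearI) (simp_all add: matrix_add_ldistrib matrix_scalar_ac scalar_matrix_assoc)

lemma subspace_commutant: "subspace {X :: 'a::real_algebra_1^'n^'n. X ** M = M ** X}"
  unfolding subspace_def
  by (auto simp: matrix_add_ldistrib matrix_add_rdistrib matrix_scalar_ac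
      simp flip: scalar_matrix_assoc)

lemma subspace_hermitian: "subspace {X :: complex^'n^'n. mat_ctrans X = X}"
  by (auto simp: subspace_def vec_eq_iff)

lemma mat_ctrans_mult_self_eq_0:
  fixes X :: "complex^'n^'m"
  assumes "mat_ctrans X ** X = 0"
  shows "X = 0"
proof -
  have "X $ l $ j = 0" for l j
  proof -
    have "of_real (\<Sum>i\<in>UNIV. (cmod (X $ i $ j))\<^sup>2) = (mat_ctrans X ** X) $ j $ j"
      by (simp add: matrix_matrix_mult_def complex_norm_square mult.commute del: of_real_power)
    also have "\<dots> = 0"
      by (simp only: assms zero_index)
    finally have "(\<Sum>i\<in>UNIV. (cmod (X $ i $ j))\<^sup>2) = 0"
      by (simp only: of_real_eq_0_iff)
    then show ?thesis
      by (simp add: sum_nonneg_eq_0_iff)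
  qed
  then show ?thesis
    by (simp add: vec_eq_iff)
qed

lemma mat_ctrans_mult_self_cancel:
  fixes X :: "complex^'n^'m"
  assumes "mat_ctrans X ** X ** Y = 0"
  shows "X ** Y = 0"
proof (rule mat_ctrans_mult_self_eq_0)
  have "mat_ctrans (X ** Y) ** (X ** Y) = mat_ctrans Y ** (mat_ctrans X ** X ** Y)"
    by (simp add: mat_ctrans_matrix_mult matrix_mul_assoc)
  then show "mat_ctrans (X ** Y) ** (X ** Y) = 0"
    using assms by simp
qed

primrec matpow :: "'a::semiring_1^'n^'n \<Rightarrow> nat \<Rightarrow> 'a^'n^'n" where
  "matpow M 0 = mat 1"
| "matpow M (Suc k) = matpow M k ** M"

lemma matpow_add: "matpow M (k + l) = matpow M k ** matpow M l"
  by (induction l) (simp_all add: matrix_mul_assoc)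

lemma matpow_commute: "M ** matpow M k = matpow M k ** M"
  by (induction k) (simp_all add: matrix_mul_assoc)

lemma mat_ctrans_matpow:
  assumes "mat_ctrans M = M"
  shows "mat_ctrans (matpow M k) = matpow M k"
  by (induction k) (simp_all add: mat_ctrans_matrix_mult assms matpow_commute)

lemma hermitian_matpow_mult_eq_0:
  assumes herm: "mat_ctrans M = M" and "matpow M k ** B = 0"
  shows "M ** B = 0"
  using assms(2)
proof (induction k arbitrary: B)
  case (Suc k)
  have "M ** M ** B = 0"
    using Suc.IH[of "M ** B"] Suc.prems by (simp add: matrix_mul_assoc)
  then have "mat_ctrans M ** M ** B = 0"
    by (simp add: herm)
  then show ?case
    by (rule mat_ctrans_mult_self_cancel)
qed simp

lemma span_matpow_commute:
  fixes M :: "'a::real_algebra_1^'n^'n"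
  assumes "X \<in> span (range (matpow M))"
  shows "X ** M = M ** X"
proof -
  have "span (range (matpow M)) \<subseteq> {X. X ** M = M ** X}"
    by (rule span_minimal) (auto simp: subspace_commutant matpow_commute)
  then show ?thesis
    using assms by blast
qed

lemma span_matpow_hermitian:
  fixes M :: "complex^'n^'n"
  assumes "mat_ctrans M = M" and "X \<in> span (range (matpow M))"
  shows "mat_ctrans X = X"
proof -
  have "span (range (matpow M)) \<subseteq> {X. mat_ctrans X = X}"
    by (rule span_minimal) (auto simp: subspace_hermitian mat_ctrans_matpow assms(1))
  then show ?thesis
    using assms(2) by blast
qed

lemma matpow_in_span_higher_powers:
  fixes M :: "'a::{euclidean_space, real_algebra_1}^'n^'n"
  shows "\<exists>k. matpow M k \<in> span (matpow M ` {Suc k..})"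
proof (rule ccontr)
  define S where "S k = span (matpow M ` {k..})" for k
  assume "\<nexists>k. matpow M k \<in> span (matpow M ` {Suc k..})"
  moreover have "S (Suc k) \<subseteq> S k" for k
    by (simp add: S_def span_mono image_mono)
  moreover have "matpow M k \<in> S k" for k
    by (simp add: S_def span_base)
  ultimately have "S (Suc k) \<subset> S k" for k
    unfolding S_def by blast
  then have dim_less: "dim (S (Suc k)) < dim (S k)" for k
    by (metis S_def dim_psubset span_span)
  have "dim (S k) + k \<le> dim (S 0)" for k
  proof (induction k)
    case (Suc k)
    then show ?case
      using dim_less[of k] by linarith
  qed simp
  then have "Suc DIM('a^'n^'n) \<le> DIM('a^'n^'n)"
    by (metis dim_subset_UNIV le_add2 order.trans)
  then show False
    by simp
qed

lemma matpow_eq_matpow_Suc_mult: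
  fixes M :: "'a::{euclidean_space, real_algebra_1}^'n^'n"
  obtains k Q where "Q \<in> span (range (matpow M))" and "matpow M k = matpow M (Suc k) ** Q"
proof -
  obtain k where k: "matpow M k \<in> span (matpow M ` {Suc k..})"
    using matpow_in_span_higher_powers by blast
  have "{Suc k..} = range ((+) (Suc k))"
    by (auto simp: le_iff_add)
  then have "matpow M ` {Suc k..} = (\<lambda>Q. matpow M (Suc k) ** Q) ` range (matpow M)"
    by (simp only: image_image matpow_add)
  then have "matpow M k \<in> (\<lambda>Q. matpow M (Suc k) ** Q) ` span (range (matpow M))"
    using k by (simp add: span_linear_image[OF linear_matrix_mult_left])
  then show thesis
    using that by blast
qed

lemma hermitian_inner_inverse:
  fixes M :: "complex^'n^'n"
  assumes herm: "mat_ctrans M = M"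
  obtains G where "mat_ctrans G = G" and "G ** M = M ** G" and "M ** G ** M = M"
proof -
  obtain k Q where Q: "Q \<in> span (range (matpow M))" "matpow M k = matpow M (Suc k) ** Q"
    by (rule matpow_eq_matpow_Suc_mult)
  then have "matpow M k ** (mat 1 - M ** Q) = 0"
    by (simp add: matrix_diff_ldistrib matrix_mul_assoc)
  then have "M ** (mat 1 - M ** Q) = 0"
    by (rule hermitian_matpow_mult_eq_0[OF herm])
  then have "M ** Q ** M = M"
    by (simp add: matrix_diff_ldistrib span_matpow_commute[OF Q(1)] flip: matrix_mul_assoc)
  then show thesis
    using that span_matpow_hermitian[OF herm Q(1)] span_matpow_commute[OF Q(1)] by blast
qed

lemma matrix_mp_inverse_exists:
  fixes A :: "complex^'n^'m"
  obtains X where "A ** X ** A = A" and "X ** A ** X = X"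
    and "mat_ctrans (A ** X) = A ** X" and "mat_ctrans (X ** A) = X ** A"
proof -
  define M where "M = mat_ctrans A ** A"
  have "mat_ctrans M = M"
    by (simp add: M_def mat_ctrans_matrix_mult)
  then obtain G where G: "mat_ctrans G = G" "G ** M = M ** G" "M ** G ** M = M"
    by (rule hermitian_inner_inverse)
  have "mat_ctrans A ** A ** (mat 1 - G ** M) = 0"
    using G(3) by (simp add: M_def matrix_diff_ldistrib matrix_mul_assoc)
  then have "A ** (mat 1 - G ** M) = 0"
    by (rule mat_ctrans_mult_self_cancel)
  then have AGM: "A ** G ** M = A"
    by (simp add: matrix_diff_ldistrib matrix_mul_assoc)
  define X where "X = G ** M ** G ** mat_ctrans A"
  have AX: "A ** X = A ** G ** mat_ctrans A"
    by (simp add: X_def matrix_mul_assoc AGM)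
  have "X ** A = G ** (M ** G ** M)"
    by (simp add: X_def M_def matrix_mul_assoc)
  then have XA: "X ** A = G ** M"
    by (simp add: G(3))
  show thesis
  proof
    show "A ** X ** A = A"
      using AGM by (simp add: AX M_def matrix_mul_assoc)
    have "X ** A ** X = G ** M ** X"
      by (simp only: XA)
    also have "\<dots> = G ** (M ** G ** M) ** G ** mat_ctrans A"
      by (simp add: X_def matrix_mul_assoc)
    finally show "X ** A ** X = X"
      by (simp add: G(3) X_def)
    show "mat_ctrans (A ** X) = A ** X"
      by (simp add: AX mat_ctrans_matrix_mult G(1) matrix_mul_assoc)
    show "mat_ctrans (X ** A) = X ** A"
      by (simp add: XA mat_ctrans_matrix_mult G(1,2) \<open>mat_ctrans M = M\<close>)
  qed
qed

definition tensor_of_matrix :: "complex^'j^'i \<Rightarrow> ('i, 'j) tensor" where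
  "tensor_of_matrix Z = (\<lambda>i j. Z $ i $ j)"

lemma tensor_of_matrix_of_tensor: "tensor_of_matrix (\<chi> i j. A i j) = A"
  by (simp add: tensor_of_matrix_def)

lemma tensor_of_matrix_mult:
  "tensor_of_matrix (Z ** W) = tensor_of_matrix Z \<star> tensor_of_matrix W"
  by (simp add: tensor_of_matrix_def einstein_def matrix_matrix_mult_def)

lemma tensor_of_matrix_mat_ctrans:
  "tensor_of_matrix (mat_ctrans Z) = ctrans (tensor_of_matrix Z)"
  by (simp add: tensor_of_matrix_def ctrans_def)

lemma is_mp_inverse_exists: "\<exists>X. is_mp_inverse (A :: ('i::finite, 'j::finite) tensor) X"
proof -
  let ?A = "\<chi> i j. A i j"
  obtain Z where "?A ** Z ** ?A = ?A" and "Z ** ?A ** Z = Z"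
    and "mat_ctrans (?A ** Z) = ?A ** Z" and "mat_ctrans (Z ** ?A) = Z ** ?A"
    by (rule matrix_mp_inverse_exists)
  then have "is_mp_inverse (tensor_of_matrix ?A) (tensor_of_matrix Z)"
    by (simp add: is_mp_inverse_def flip: tensor_of_matrix_mult tensor_of_matrix_mat_ctrans)
  then show ?thesis
    by (auto simp: tensor_of_matrix_of_tensor)
qed

lemma einstein_assoc: "A \<star> (B \<star> C) = A \<star> B \<star> C"
proof -
  have "(\<Sum>k\<in>UNIV. A i k * (\<Sum>l\<in>UNIV. B k l * C l j))
      = (\<Sum>l\<in>UNIV. (\<Sum>k\<in>UNIV. A i k * B k l) * C l j)" for i j
    by (simp add: sum_distrib_left sum_distrib_right mult.assoc) (rule sum.swap)
  then show ?thesis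
    by (simp add: einstein_def fun_eq_iff)
qed

lemma ctrans_einstein: "ctrans (A \<star> B) = ctrans B \<star> ctrans A"
  by (simp add: ctrans_def einstein_def fun_eq_iff mult.commute)

lemma is_mp_inverse_unique:
  assumes X: "is_mp_inverse A X" and Y: "is_mp_inverse A Y"
  shows "X = Y"
proof -
  from X have X1: "A \<star> X \<star> A = A" and X2: "X \<star> A \<star> X = X"
    and X3: "ctrans (A \<star> X) = A \<star> X" and X4: "ctrans (X \<star> A) = X \<star> A"
    by (simp_all add: is_mp_inverse_def)
  from Y have Y1: "A \<star> Y \<star> A = A" and Y2: "Y \<star> A \<star> Y = Y"
    and Y3: "ctrans (A \<star> Y) = A \<star> Y" and Y4: "ctrans (Y \<star> A) = Y \<star> A"
    by (simp_all add: is_mp_inverse_def)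
  have "X = X \<star> ctrans (A \<star> X)"
    using X2 X3 by (simp add: einstein_assoc)
  also have "\<dots> = X \<star> ctrans (A \<star> X) \<star> ctrans (A \<star> Y)"
    by (metis Y1 ctrans_einstein einstein_assoc)
  also have "\<dots> = X \<star> A \<star> Y"
    using X2 X3 Y3 by (simp add: einstein_assoc)
  finally have X_eq: "X = X \<star> A \<star> Y" .
  have "Y = ctrans (Y \<star> A) \<star> Y"
    using Y2 Y4 by simp
  also have "\<dots> = ctrans (X \<star> A) \<star> ctrans (Y \<star> A) \<star> Y"
    by (metis X1 ctrans_einstein einstein_assoc)
  also have "\<dots> = X \<star> A \<star> (Y \<star> A \<star> Y)"
    using X4 Y4 by (simp add: einstein_assoc)
  also have "\<dots> = X \<star> A \<star> Y"
    using Y2 by simp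
  finally show ?thesis
    using X_eq by simp
qed

lemma is_mp_inverse_mp_inv: "is_mp_inverse A (mp_inv A)"
  unfolding mp_inv_def
  by (rule theI'[OF ex_ex1I[OF is_mp_inverse_exists is_mp_inverse_unique]])

lemma einstein_mp_inv_einstein [simp]:
  "A \<star> mp_inv A \<star> A = A" "X \<star> A \<star> mp_inv A \<star> A = X \<star> A"
  using is_mp_inverse_mp_inv[of A] by (simp_all add: is_mp_inverse_def flip: einstein_assoc)

lemma mp_inv_einstein_mp_inv [simp]:
  "mp_inv A \<star> A \<star> mp_inv A = mp_inv A" "X \<star> mp_inv A \<star> A \<star> mp_inv A = X \<star> mp_inv A"
  using is_mp_inverse_mp_inv[of A] by (simp_all add: is_mp_inverse_def flip: einstein_assoc)

lemma ctrans_einstein_mp_inv [simp]: "ctrans (A \<star> mp_inv A) = A \<star> mp_inv A"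
  using is_mp_inverse_mp_inv[of A] by (simp add: is_mp_inverse_def)

lemma ctrans_mp_inv_einstein [simp]: "ctrans (mp_inv A \<star> A) = mp_inv A \<star> A"
  using is_mp_inverse_mp_inv[of A] by (simp add: is_mp_inverse_def)

lemma mp_inv_einstein_left_factor:
  assumes "mp_inv R \<star> R \<star> P = P"
  shows "mp_inv (R \<star> P) \<star> (R \<star> P) = mp_inv P \<star> P"
proof -
  define Q where "Q = mp_inv (R \<star> P) \<star> (R \<star> P)"
  define E where "E = mp_inv P \<star> P"
  have "P \<star> Q = mp_inv R \<star> (R \<star> P \<star> mp_inv (R \<star> P) \<star> (R \<star> P))"
    by (metis Q_def assms einstein_assoc)
  also have "\<dots> = P"
    by (simp only: einstein_mp_inv_einstein(1)) (simp add: assms einstein_assoc)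
  finally have "E \<star> Q = E"
    by (simp add: E_def flip: einstein_assoc)
  moreover have "Q \<star> E = Q"
    by (simp add: Q_def E_def einstein_assoc)
  moreover have "ctrans Q = Q" and "ctrans E = E"
    by (simp_all add: Q_def E_def)
  ultimately have "Q = E"
    by (metis ctrans_einstein)
  then show ?thesis
    by (simp add: Q_def E_def)
qed

lemma einstein_mp_inv_right_factor:
  assumes "P \<star> T \<star> mp_inv T = P"
  shows "(P \<star> T) \<star> mp_inv (P \<star> T) = P \<star> mp_inv P"
proof -
  define Q where "Q = (P \<star> T) \<star> mp_inv (P \<star> T)"
  define E where "E = P \<star> mp_inv P"
  have "Q \<star> P = ((P \<star> T) \<star> mp_inv (P \<star> T) \<star> (P \<star> T)) \<star> mp_inv T"
    by (metis Q_def assms einstein_assoc)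
  also have "\<dots> = P"
    by (simp only: einstein_mp_inv_einstein(1) assms)
  finally have "Q \<star> E = E"
    by (simp add: E_def einstein_assoc)
  moreover have "E \<star> Q = Q"
    by (simp add: Q_def E_def einstein_assoc)
  moreover have "ctrans Q = Q" and "ctrans E = E"
    by (simp_all add: Q_def E_def)
  ultimately have "Q = E"
    by (metis ctrans_einstein)
  then show ?thesis
    by (simp add: Q_def E_def)
qed

lemma mp_inv_through_factors:
  assumes "mp_inv R \<star> R \<star> P = P" and "P \<star> T \<star> mp_inv T = P"
  shows "mp_inv (R \<star> P) \<star> (R \<star> P \<star> T) \<star> mp_inv (P \<star> T) = mp_inv P"
proof -
  have "mp_inv (R \<star> P) \<star> (R \<star> P \<star> T) \<star> mp_inv (P \<star> T)
      = (mp_inv (R \<star> P) \<star> (R \<star> P)) \<star> T \<star> mp_inv (P \<star> T)"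
    by (simp add: einstein_assoc)
  also have "\<dots> = mp_inv P \<star> ((P \<star> T) \<star> mp_inv (P \<star> T))"
    by (simp only: mp_inv_einstein_left_factor[OF assms(1)]) (simp add: einstein_assoc)
  also have "\<dots> = mp_inv P"
    by (simp only: einstein_mp_inv_right_factor[OF assms(2)]) (simp add: einstein_assoc)
  finally show ?thesis .
qed

theorem theorem3p3:
  fixes R :: "('i::finite, 'h::finite) tensor"
    and S :: "('h, 'g::finite) tensor"
    and T :: "('g, 'j::finite) tensor"
    and A :: "('i, 'j) tensor"
  assumes "A = R \<star> S \<star> T"
  shows "mp_inv (mp_inv R \<star> A \<star> mp_inv T) = mp_inv (A \<star> mp_inv T) \<star> A \<star> mp_inv (mp_inv R \<star> A)"
proof -
  define P where "P = mp_inv R \<star> A \<star> mp_inv T"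
  have RP: "A \<star> mp_inv T = R \<star> P" and PT: "mp_inv R \<star> A = P \<star> T"
    and RPT: "R \<star> P \<star> T = A"
    by (simp_all add: P_def assms einstein_assoc)
  have "mp_inv (A \<star> mp_inv T) \<star> A \<star> mp_inv (mp_inv R \<star> A)
      = mp_inv (R \<star> P) \<star> (R \<star> P \<star> T) \<star> mp_inv (P \<star> T)"
    by (simp only: RP PT RPT)
  also have "\<dots> = mp_inv P"
    by (rule mp_inv_through_factors) (simp_all add: P_def einstein_assoc)
  finally show ?thesis
    by (simp add: P_def)
qed

end
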